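(* Let $(V,E)$ be a finite graph with $E\ne\emptyset$ and $p\in(0,1)$. Let $(\eta_t,\sigma_t)_{t\ge0}$ be a continuous-time Markov jump process on $\{0,1\}^E\times\{-1,1\}^V$ with rates: if there exists $x\in V$ such that $\sigma'=\sigma^x$ and $\eta'(e)=\eta(e)$ for all $e\in E\setminus E_x$, then $c((\eta,\sigma),(\eta',\sigma'))=(1-p)^{|\{e\in E_x:\eta'(e)=0\}|}p^{|\{e\in E_x:\eta'(e)=1\}|}\mathbf 1_{(\eta',\sigma')\in\mathcal C_x}$; all other off-diagonal rates are $0$. Then $(\eta_t,\sigma_t)_{t\ge0}$ is reversible with respect to $IP$; its spin marginal $(\sigma_t)_{t\ge0}$ is a Markov jump process evolving according to the Glauber dynamics with rates $c(\sigma,\sigma^x)=(1-p)^{|\{e\in E_x:\delta_\sigma(e)=1\}|}$ for $x\in V$ (and rate $0$ for changes of two or more spins); and its edge marginal $(\eta_t)_{t\ge0}$ is not a Markov jump process.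
   Context: Edge configurations $\eta\in\{0,1\}^E$, spin configurations $\sigma\in\{-1,1\}^V$. For $e=\langle x,y\rangle$, $\delta_\sigma(e)=\mathbf 1_{\sigma(x)=\sigma(y)}$. $IP(\eta,\sigma)=\frac1Z\prod_{e\in E}\big(p\mathbf 1_{\eta(e)=1}\delta_\sigma(e)+(1-p)\mathbf 1_{\eta(e)=0}\big)$ with $Z$ the normalizing constant. $E_x$ is the set of edges with endvertex $x$; $\sigma^x$ is $\sigma$ with the spin at $x$ flipped. $\mathcal C_x=\{(\eta,\sigma):\eta(e)\le\delta_\sigma(e)\text{ for all }e\in E_x\}$. Reversibility w.r.t. $IP$ means $IP(a)c(a,b)=IP(b)c(b,a)$ for all states $a,b$. A marginal process is a Markov jump process if it is a time-homogeneous Markov process for every initial distribution, with transition rates not depending on the initial distribution. *)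

theory Defs
  imports Complex_Main
begin

definition generator :: "'s set \<Rightarrow> ('s \<Rightarrow> 's \<Rightarrow> real) \<Rightarrow> 's \<Rightarrow> 's \<Rightarrow> real" where
  "generator S c a b = (if a = b then - (\<Sum>b'\<in>S - {a}. c a b') else c a b)"

fun matpow :: "'s set \<Rightarrow> ('s \<Rightarrow> 's \<Rightarrow> real) \<Rightarrow> nat \<Rightarrow> 's \<Rightarrow> 's \<Rightarrow> real" where
  "matpow S Q 0 a b = (if a = b then 1 else 0)"
| "matpow S Q (Suc n) a b = (\<Sum>m\<in>S. matpow S Q n a m * Q m b)"

definition trans_fun :: "'s set \<Rightarrow> ('s \<Rightarrow> 's \<Rightarrow> real) \<Rightarrow> real \<Rightarrow> 's \<Rightarrow> 's \<Rightarrow> real" where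
  "trans_fun S c t a b = (\<Sum>n. t ^ n / fact n * matpow S (generator S c) n a b)"

text \<open>Probability that the observed process f(X) takes the values y_i at times t_i
  (list of pairs (t_i, y_i)), given X at time t0 is in state a.\<close>
fun mfdd_from :: "'s set \<Rightarrow> ('s \<Rightarrow> 's \<Rightarrow> real) \<Rightarrow> ('s \<Rightarrow> 'o) \<Rightarrow> 's \<Rightarrow> real
    \<Rightarrow> (real \<times> 'o) list \<Rightarrow> real" where
  "mfdd_from S c f a t0 [] = 1"
| "mfdd_from S c f a t0 ((t, y) # rest) =
     (\<Sum>b\<in>{b\<in>S. f b = y}. trans_fun S c (t - t0) a b * mfdd_from S c f b t rest)"

definition mfdd :: "'s set \<Rightarrow> ('s \<Rightarrow> 's \<Rightarrow> real) \<Rightarrow> ('s \<Rightarrow> real) \<Rightarrow> ('s \<Rightarrow> 'o)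
    \<Rightarrow> (real \<times> 'o) list \<Rightarrow> real" where
  "mfdd S c \<mu> f obs = (\<Sum>a\<in>S. \<mu> a * mfdd_from S c f a 0 obs)"

definition valid_times :: "(real \<times> 'o) list \<Rightarrow> bool" where
  "valid_times obs \<longleftrightarrow> sorted (map fst obs) \<and> (\<forall>t\<in>set (map fst obs). 0 \<le> t)"

definition is_distr :: "'s set \<Rightarrow> ('s \<Rightarrow> real) \<Rightarrow> bool" where
  "is_distr S \<mu> \<longleftrightarrow> (\<forall>a\<in>S. 0 \<le> \<mu> a) \<and> (\<Sum>a\<in>S. \<mu> a) = 1"

definition push :: "'s set \<Rightarrow> ('s \<Rightarrow> 'o) \<Rightarrow> ('s \<Rightarrow> real) \<Rightarrow> 'o \<Rightarrow> real" where
  "push S f \<mu> y = (\<Sum>a\<in>{a\<in>S. f a = y}. \<mu> a)"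

definition is_rate :: "'s set \<Rightarrow> ('s \<Rightarrow> 's \<Rightarrow> real) \<Rightarrow> bool" where
  "is_rate S c \<longleftrightarrow> (\<forall>a\<in>S. \<forall>b\<in>S. a \<noteq> b \<longrightarrow> 0 \<le> c a b)"

text \<open>The marginal f(X) of the jump process (S,c) is, for every initial distribution,
  a time-homogeneous Markov jump process on T with rates c' (equality of all fdds).\<close>
definition marginal_is_mjp_with :: "'s set \<Rightarrow> ('s \<Rightarrow> 's \<Rightarrow> real) \<Rightarrow> ('s \<Rightarrow> 'o)
    \<Rightarrow> 'o set \<Rightarrow> ('o \<Rightarrow> 'o \<Rightarrow> real) \<Rightarrow> bool" where
  "marginal_is_mjp_with S c f T c' \<longleftrightarrow>
     (\<forall>\<mu>. is_distr S \<mu> \<longrightarrow> (\<forall>obs. valid_times obs \<longrightarrow> set (map snd obs) \<subseteq> T \<longrightarrow>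
        mfdd S c \<mu> f obs = mfdd T c' (push S f \<mu>) id obs))"

definition marginal_is_mjp :: "'s set \<Rightarrow> ('s \<Rightarrow> 's \<Rightarrow> real) \<Rightarrow> ('s \<Rightarrow> 'o) \<Rightarrow> 'o set \<Rightarrow> bool" where
  "marginal_is_mjp S c f T \<longleftrightarrow> (\<exists>c'. is_rate T c' \<and> marginal_is_mjp_with S c f T c')"

definition reversible :: "'s set \<Rightarrow> ('s \<Rightarrow> real) \<Rightarrow> ('s \<Rightarrow> 's \<Rightarrow> real) \<Rightarrow> bool" where
  "reversible S \<pi> c \<longleftrightarrow> (\<forall>a\<in>S. \<forall>b\<in>S. \<pi> a * c a b = \<pi> b * c b a)"

text \<open>Vertices: the finite type 'v (V = UNIV); edges: 2-element vertex sets in E.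
  Edge configurations: functions into {0,1} on E, zero off E; spins: functions into {-1,1}.\<close>

type_synonym 'v econf = "'v set \<Rightarrow> nat"
type_synonym 'v sconf = "'v \<Rightarrow> int"

definition Eta :: "'v set set \<Rightarrow> 'v econf set" where
  "Eta E = {\<eta>. (\<forall>e\<in>E. \<eta> e \<in> {0, 1}) \<and> (\<forall>e. e \<notin> E \<longrightarrow> \<eta> e = 0)}"

definition Sig :: "'v sconf set" where
  "Sig = {\<sigma>. \<forall>x. \<sigma> x \<in> {-1, 1}}"

definition States :: "'v set set \<Rightarrow> ('v econf \<times> 'v sconf) set" where
  "States E = Eta E \<times> Sig"

definition edges_at :: "'v set set \<Rightarrow> 'v \<Rightarrow> 'v set set" where
  "edges_at E x = {e\<in>E. x \<in> e}"

definition delta :: "'v sconf \<Rightarrow> 'v set \<Rightarrow> nat" where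
  "delta \<sigma> e = (if \<forall>x\<in>e. \<forall>y\<in>e. \<sigma> x = \<sigma> y then 1 else 0)"

definition flip :: "'v sconf \<Rightarrow> 'v \<Rightarrow> 'v sconf" where
  "flip \<sigma> x = \<sigma>(x := - \<sigma> x)"

definition IPweight :: "'v set set \<Rightarrow> real \<Rightarrow> 'v econf \<times> 'v sconf \<Rightarrow> real" where
  "IPweight E p s = (case s of (\<eta>, \<sigma>) \<Rightarrow>
     (\<Prod>e\<in>E. p * (if \<eta> e = 1 then 1 else 0) * real (delta \<sigma> e) + (1 - p) * (if \<eta> e = 0 then 1 else 0)))"

definition IP :: "'v set set \<Rightarrow> real \<Rightarrow> 'v econf \<times> 'v sconf \<Rightarrow> real" where
  "IP E p s = IPweight E p s / (\<Sum>s'\<in>States E. IPweight E p s')"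

definition Cx :: "'v set set \<Rightarrow> 'v \<Rightarrow> ('v econf \<times> 'v sconf) set" where
  "Cx E x = {(\<eta>, \<sigma>). \<forall>e\<in>edges_at E x. \<eta> e \<le> delta \<sigma> e}"

text \<open>Joint rates: the vertex x is unique when it exists (sigma' = sigma^x).\<close>
definition joint_rate :: "'v set set \<Rightarrow> real \<Rightarrow> 'v econf \<times> 'v sconf \<Rightarrow> 'v econf \<times> 'v sconf \<Rightarrow> real" where
  "joint_rate E p s s' = (case s of (\<eta>, \<sigma>) \<Rightarrow> case s' of (\<eta>', \<sigma>') \<Rightarrow>
     (if \<exists>x. \<sigma>' = flip \<sigma> x \<and> (\<forall>e\<in>E - edges_at E x. \<eta>' e = \<eta> e) then
        (let x = (THE x. \<sigma>' = flip \<sigma> x \<and> (\<forall>e\<in>E - edges_at E x. \<eta>' e = \<eta> e)) in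
          (1 - p) ^ card {e\<in>edges_at E x. \<eta>' e = 0} * p ^ card {e\<in>edges_at E x. \<eta>' e = 1}
          * (if (\<eta>', \<sigma>') \<in> Cx E x then 1 else 0))
      else 0))"

definition glauber_rate :: "'v set set \<Rightarrow> real \<Rightarrow> 'v sconf \<Rightarrow> 'v sconf \<Rightarrow> real" where
  "glauber_rate E p \<sigma> \<sigma>' =
     (if \<exists>x. \<sigma>' = flip \<sigma> x then
        (let x = (THE x. \<sigma>' = flip \<sigma> x) in (1 - p) ^ card {e\<in>edges_at E x. delta \<sigma> e = 1})
      else 0)"

end

theory Submission
  imports Defs "HOL-Library.FuncSet"
begin

(* A move at x flips the spin at x and redraws the edges at x with rate equal to their IP weight
   given the new spins. Hence IP(eta, sigma) times the rate of a move splits into the IP factors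
   off the edges at x, which the move leaves unchanged, and the factors of the old and of the new
   configuration on the edges at x: an expression symmetric in the two states, which is detailed
   balance.

   A function f of a finite Markov jump process is, for every initial law, a Markov jump process
   with rates c' iff the chain is lumpable: the generator summed over each fibre of f depends
   on the starting state only through its image. Sufficiency lifts to all powers of the generator
   and hence to the transition function; necessity follows by starting from a point mass and
   differentiating the one-time distributions at t = 0. Summing the joint rates over the redrawn
   edges gives, edge by edge, 1 - p + p delta_{sigma^x}(e), i.e. the Glauber rate, so the spin
   marginal is lumpable. The edge marginal is not: from the configuration with all edges closed,
   an edge {u, v} can be opened in one move if the spins at u and v disagree, but not if all
   spins agree. *)

lemma matpow_abs_le:
  assumes "\<And>m b'. m \<in> S \<Longrightarrow> b' \<in> S \<Longrightarrow> \<bar>Q m b'\<bar> \<le> B" and "0 \<le> B" and "b \<in> S"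
  shows "\<bar>matpow S Q n a b\<bar> \<le> (real (card S) * B) ^ n"
  using assms(3)
proof (induction n arbitrary: b)
  case 0
  then show ?case by simp
next
  case (Suc n)
  have "\<bar>matpow S Q (Suc n) a b\<bar> \<le> (\<Sum>m\<in>S. \<bar>matpow S Q n a m\<bar> * \<bar>Q m b\<bar>)"
    by (simp add: abs_mult order_trans[OF sum_abs])
  also have "\<dots> \<le> (\<Sum>m\<in>S. (real (card S) * B) ^ n * B)"
    using assms(1,2) Suc by (intro sum_mono mult_mono) auto
  also have "\<dots> = (real (card S) * B) ^ Suc n"
    by (simp add: algebra_simps)
  finally show ?case .
qed

lemma matpow_1: "finite S \<Longrightarrow> a \<in> S \<Longrightarrow> matpow S Q 1 a b = Q a b"
  by (simp add: if_distrib[of "\<lambda>x. x * _"] cong: if_cong)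

lemma summable_trans_fun:
  assumes "finite S" and "b \<in> S"
  shows "summable (\<lambda>n. t ^ n / fact n * matpow S (generator S c) n a b)"
proof -
  define B where "B = (\<Sum>m\<in>S. \<Sum>b'\<in>S. \<bar>generator S c m b'\<bar>)"
  define K where "K = real (card S) * B"
  have "\<bar>generator S c m b'\<bar> \<le> B" if "m \<in> S" "b' \<in> S" for m b'
  proof -
    have "\<bar>generator S c m b'\<bar> \<le> (\<Sum>b'\<in>S. \<bar>generator S c m b'\<bar>)"
      by (rule member_le_sum) (use assms(1) that(2) in auto)
    also have "\<dots> \<le> B"
      unfolding B_def by (rule member_le_sum) (use assms(1) that(1) in \<open>auto intro: sum_nonneg\<close>)
    finally show ?thesis .
  qed
  moreover have "0 \<le> B"
    by (simp add: B_def sum_nonneg)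
  ultimately have matpow_le: "\<bar>matpow S (generator S c) n a b\<bar> \<le> K ^ n" for n
    unfolding K_def using assms(2) by (rule matpow_abs_le)
  have "norm (t ^ n / fact n * matpow S (generator S c) n a b) \<le> inverse (fact n) * (K * \<bar>t\<bar>) ^ n" for n
  proof -
    have "norm (t ^ n / fact n * matpow S (generator S c) n a b)
        = inverse (fact n) * \<bar>t\<bar> ^ n * \<bar>matpow S (generator S c) n a b\<bar>"
      by (simp add: abs_mult power_abs divide_inverse)
    also have "\<dots> \<le> inverse (fact n) * \<bar>t\<bar> ^ n * K ^ n"
      by (intro mult_left_mono matpow_le) simp
    finally show ?thesis
      by (simp add: power_mult_distrib mult_ac)
  qed
  then show ?thesis
    by (intro summable_comparison_test[OF _ summable_exp]) auto
qed

lemma trans_fun_has_field_derivative_0: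
  assumes "finite S" and "a \<in> S" and "b \<in> S"
  shows "((\<lambda>t. trans_fun S c t a b) has_field_derivative generator S c a b) (at 0)"
proof -
  define cc where "cc n = matpow S (generator S c) n a b / fact n" for n
  have trans_fun_eq: "trans_fun S c t a b = (\<Sum>n. cc n * t ^ n)" for t
    by (simp add: trans_fun_def cc_def ac_simps)
  have "summable (\<lambda>n. cc n * t ^ n)" for t
    using summable_trans_fun[OF assms(1,3), of t] by (simp add: cc_def ac_simps)
  then have "((\<lambda>t. \<Sum>n. cc n * t ^ n) has_field_derivative (\<Sum>n. diffs cc n * 0 ^ n)) (at 0)"
    by (rule termdiffs_strong_converges_everywhere)
  moreover have "(\<Sum>n. diffs cc n * 0 ^ n) = matpow S (generator S c) 1 a b"
    by (simp only: powser_zero) (simp add: diffs_def cc_def)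
  moreover have "matpow S (generator S c) 1 a b = generator S c a b"
    using assms(1,2) by (rule matpow_1)
  ultimately show ?thesis
    by (simp add: trans_fun_eq)
qed

lemma matpow_lumped:
  assumes "finite S" and "finite T" and "f ` S \<subseteq> T"
    and lumped: "\<And>a y. a \<in> S \<Longrightarrow> y \<in> T \<Longrightarrow> (\<Sum>b\<in>{b\<in>S. f b = y}. Q a b) = Q' (f a) y"
    and "a \<in> S" and "y \<in> T"
  shows "(\<Sum>b\<in>{b\<in>S. f b = y}. matpow S Q n a b) = matpow T Q' n (f a) y"
  using \<open>y \<in> T\<close>
proof (induction n arbitrary: y)
  case 0
  show ?case
    using assms(1,5) by (simp add: sum.delta)
next
  case (Suc n)
  have "(\<Sum>b\<in>{b\<in>S. f b = y}. matpow S Q (Suc n) a b)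
      = (\<Sum>m\<in>S. matpow S Q n a m * (\<Sum>b\<in>{b\<in>S. f b = y}. Q m b))"
    by (simp add: sum_distrib_left) (rule sum.swap)
  also have "\<dots> = (\<Sum>m\<in>S. matpow S Q n a m * Q' (f m) y)"
    using lumped Suc.prems by simp
  also have "\<dots> = (\<Sum>z\<in>T. \<Sum>m\<in>{m\<in>S. f m = z}. matpow S Q n a m * Q' (f m) y)"
    by (rule sum.group[symmetric]) (use assms(1-3) in auto)
  also have "\<dots> = (\<Sum>z\<in>T. matpow T Q' n (f a) z * Q' z y)"
  proof (rule sum.cong[OF refl])
    fix z assume "z \<in> T"
    have "(\<Sum>m\<in>{m\<in>S. f m = z}. matpow S Q n a m * Q' (f m) y)
        = (\<Sum>m\<in>{m\<in>S. f m = z}. matpow S Q n a m) * Q' z y"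
      by (simp add: sum_distrib_right)
    then show "(\<Sum>m\<in>{m\<in>S. f m = z}. matpow S Q n a m * Q' (f m) y) = matpow T Q' n (f a) z * Q' z y"
      using Suc.IH[OF \<open>z \<in> T\<close>] by simp
  qed
  finally show ?case
    by simp
qed

definition lumpable ::
    "'s set \<Rightarrow> ('s \<Rightarrow> 's \<Rightarrow> real) \<Rightarrow> ('s \<Rightarrow> 'o) \<Rightarrow> 'o set \<Rightarrow> ('o \<Rightarrow> 'o \<Rightarrow> real) \<Rightarrow> bool"
  where
  "lumpable S c f T c' \<longleftrightarrow>
     (\<forall>a\<in>S. \<forall>y\<in>T. (\<Sum>b\<in>{b\<in>S. f b = y}. generator S c a b) = generator T c' (f a) y)"

lemma trans_fun_lumped:
  assumes "finite S" and "finite T" and "f ` S \<subseteq> T"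
    and "lumpable S c f T c'"
    and "a \<in> S" and "y \<in> T"
  shows "(\<Sum>b\<in>{b\<in>S. f b = y}. trans_fun S c t a b) = trans_fun T c' t (f a) y"
proof -
  have "(\<Sum>b\<in>{b\<in>S. f b = y}. trans_fun S c t a b)
      = (\<Sum>n. \<Sum>b\<in>{b\<in>S. f b = y}. t ^ n / fact n * matpow S (generator S c) n a b)"
    unfolding trans_fun_def
    by (rule suminf_sum[symmetric]) (use assms(1) summable_trans_fun in auto)
  also have "\<dots> = (\<Sum>n. t ^ n / fact n * matpow T (generator T c') n (f a) y)"
    by (simp only: sum_distrib_left[symmetric] matpow_lumped[where Q = "generator S c" and Q' = "generator T c'",
        OF assms(1-3) assms(4)[unfolded lumpable_def, rule_format] assms(5,6)])
  finally show ?thesis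
    unfolding trans_fun_def .
qed

lemma mfdd_from_lumped:
  assumes "finite S" and "finite T" and "f ` S \<subseteq> T"
    and "lumpable S c f T c'"
  shows "a \<in> S \<Longrightarrow> set (map snd obs) \<subseteq> T \<Longrightarrow>
    mfdd_from S c f a t0 obs = mfdd_from T c' id (f a) t0 obs"
proof (induction obs arbitrary: a t0)
  case Nil
  then show ?case by simp
next
  case (Cons obs1 rest)
  obtain t y where obs1: "obs1 = (t, y)"
    by force
  have "y \<in> T" and rest: "set (map snd rest) \<subseteq> T"
    using Cons.prems obs1 by auto
  have IH: "mfdd_from S c f b t rest = mfdd_from T c' id y t rest" if "b \<in> {b\<in>S. f b = y}" for b
    using Cons.IH[of b t] rest that by (simp add: id_def)
  have "mfdd_from S c f a t0 ((t, y) # rest)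
      = (\<Sum>b\<in>{b\<in>S. f b = y}. trans_fun S c (t - t0) a b * mfdd_from S c f b t rest)"
    by simp
  also have "\<dots> = (\<Sum>b\<in>{b\<in>S. f b = y}. trans_fun S c (t - t0) a b * mfdd_from T c' id y t rest)"
    by (rule sum.cong[OF refl]) (simp only: IH)
  also have "\<dots> = trans_fun T c' (t - t0) (f a) y * mfdd_from T c' id y t rest"
    by (simp add: sum_distrib_right[symmetric] trans_fun_lumped[OF assms Cons.prems(1) \<open>y \<in> T\<close>])
  also have "\<dots> = mfdd_from T c' id (f a) t0 ((t, y) # rest)"
    using \<open>y \<in> T\<close> by (simp add: Collect_conj_eq)
  finally show ?case
    unfolding obs1 .
qed

lemma marginal_is_mjp_with_if_lumpable:
  assumes "finite S" and "finite T" and "f ` S \<subseteq> T"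
    and "lumpable S c f T c'"
  shows "marginal_is_mjp_with S c f T c'"
  unfolding marginal_is_mjp_with_def
proof (intro allI impI)
  fix \<mu> :: "_ \<Rightarrow> real" and obs :: "(real \<times> _) list"
  assume obs: "set (map snd obs) \<subseteq> T"
  have "mfdd S c \<mu> f obs = (\<Sum>a\<in>S. \<mu> a * mfdd_from T c' id (f a) 0 obs)"
    unfolding mfdd_def using mfdd_from_lumped[OF assms _ obs] by simp
  also have "\<dots> = (\<Sum>w\<in>T. \<Sum>a\<in>{a\<in>S. f a = w}. \<mu> a * mfdd_from T c' id (f a) 0 obs)"
    by (rule sum.group[symmetric]) (use assms(1-3) in auto)
  also have "\<dots> = (\<Sum>w\<in>T. push S f \<mu> w * mfdd_from T c' id w 0 obs)"
    unfolding push_def by (auto simp: sum_distrib_right intro!: sum.cong)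
  finally show "mfdd S c \<mu> f obs = mfdd T c' (push S f \<mu>) id obs"
    by (simp add: mfdd_def)
qed

lemma mfdd_point_mass:
  assumes "finite S" and "a \<in> S"
  shows "mfdd S c (\<lambda>s. if s = a then 1 else 0) f [(t, y)] = (\<Sum>b\<in>{b\<in>S. f b = y}. trans_fun S c t a b)"
  using assms by (simp add: mfdd_def if_distrib[of "\<lambda>x. x * _"] cong: if_cong)

lemma push_point_mass:
  assumes "finite S" and "a \<in> S"
  shows "push S f (\<lambda>s. if s = a then 1 else 0) = (\<lambda>w. if w = f a then 1 else 0)"
  using assms by (auto simp: push_def sum.delta)

lemma lumpable_if_marginal_is_mjp_with:
  assumes marginal: "marginal_is_mjp_with S c f T c'"
    and "finite S" and "finite T" and "f ` S \<subseteq> T"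
  shows "lumpable S c f T c'"
  unfolding lumpable_def
proof (intro ballI)
  fix a y assume "a \<in> S" and "y \<in> T"
  \<comment> \<open>compare the right derivatives at 0 of the one-time distributions from a point mass\<close>
  define \<mu> where "\<mu> s = (if s = a then 1 else 0 :: real)" for s
  have "is_distr S \<mu>"
    using assms(2) \<open>a \<in> S\<close> by (simp add: is_distr_def \<mu>_def)
  have "f a \<in> T"
    using assms(4) \<open>a \<in> S\<close> by auto
  have agree: "(\<Sum>b\<in>{b\<in>S. f b = y}. trans_fun S c t a b) = trans_fun T c' t (f a) y"
    if "0 \<le> t" for t
  proof -
    have "mfdd S c \<mu> f [(t, y)] = mfdd T c' (push S f \<mu>) id [(t, y)]"
      using marginal \<open>is_distr S \<mu>\<close> that \<open>y \<in> T\<close>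
      by (simp add: marginal_is_mjp_with_def valid_times_def)
    moreover have "{b\<in>T. id b = y} = {y}"
      using \<open>y \<in> T\<close> by auto
    ultimately show ?thesis
      using assms(2,3) \<open>a \<in> S\<close> \<open>f a \<in> T\<close>
      unfolding \<mu>_def push_point_mass[OF assms(2) \<open>a \<in> S\<close>] by (simp add: mfdd_point_mass)
  qed
  have "((\<lambda>t. \<Sum>b\<in>{b\<in>S. f b = y}. trans_fun S c t a b) has_field_derivative
      (\<Sum>b\<in>{b\<in>S. f b = y}. generator S c a b)) (at 0 within {0..})"
    using assms(2) \<open>a \<in> S\<close>
    by (intro has_field_derivative_at_within[OF DERIV_sum] trans_fun_has_field_derivative_0) auto
  then have "((\<lambda>t. trans_fun T c' t (f a) y) has_field_derivative
      (\<Sum>b\<in>{b\<in>S. f b = y}. generator S c a b)) (at 0 within {0..})"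
    by (rule has_field_derivative_transform_within[where d = 1]) (auto simp: agree)
  moreover have "((\<lambda>t. trans_fun T c' t (f a) y) has_field_derivative generator T c' (f a) y)
      (at 0 within {0..})"
    using assms(3) \<open>y \<in> T\<close> \<open>f a \<in> T\<close>
    by (intro has_field_derivative_at_within[OF trans_fun_has_field_derivative_0])
  moreover have "at (0::real) within {0..} \<noteq> bot"
    by (simp add: at_within_Ici_at_right)
  ultimately show "(\<Sum>b\<in>{b\<in>S. f b = y}. generator S c a b) = generator T c' (f a) y"
    by (rule has_field_derivative_unique)
qed

lemma lumpable_if_lumped_rates:
  assumes "finite S" and "finite T" and "f ` S \<subseteq> T"
    and lumped: "\<And>a y. a \<in> S \<Longrightarrow> y \<in> T \<Longrightarrow> y \<noteq> f a \<Longrightarrow>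
      (\<Sum>b\<in>{b\<in>S. f b = y}. c a b) = c' (f a) y"
  shows "lumpable S c f T c'"
  unfolding lumpable_def
proof (intro ballI)
  fix a y assume "a \<in> S" and "y \<in> T"
  show "(\<Sum>b\<in>{b\<in>S. f b = y}. generator S c a b) = generator T c' (f a) y"
  proof (cases "y = f a")
    case False
    then have "(\<Sum>b\<in>{b\<in>S. f b = y}. generator S c a b) = (\<Sum>b\<in>{b\<in>S. f b = y}. c a b)"
      by (intro sum.cong) (auto simp: generator_def)
    then show ?thesis
      using False lumped \<open>a \<in> S\<close> \<open>y \<in> T\<close> by (simp add: generator_def)
  next
    case True
    \<comment> \<open>no condition is needed here: the generator rows sum to 0, so the rates inside the fibre cancel\<close>
    let ?fibre = "{b\<in>S. f b = f a}"
    have "(\<Sum>b\<in>S - {a}. c a b) = (\<Sum>b\<in>?fibre - {a}. c a b) + (\<Sum>b\<in>{b\<in>S. f b \<noteq> f a}. c a b)"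
      using assms(1) by (subst sum.union_disjoint[symmetric]) (auto intro: sum.cong)
    also have "(\<Sum>b\<in>{b\<in>S. f b \<noteq> f a}. c a b) = (\<Sum>z\<in>T - {f a}. \<Sum>b\<in>{b\<in>S. f b = z}. c a b)"
      using assms(1-3)
      by (subst sum.group[symmetric, where S = "{b\<in>S. f b \<noteq> f a}" and T = "T - {f a}" and g = f])
        (auto intro: sum.cong)
    also have "\<dots> = (\<Sum>z\<in>T - {f a}. c' (f a) z)"
      using lumped \<open>a \<in> S\<close> by (intro sum.cong) auto
    finally have "(\<Sum>b\<in>S - {a}. c a b) = (\<Sum>b\<in>?fibre - {a}. c a b) + (\<Sum>z\<in>T - {f a}. c' (f a) z)" .
    moreover have "(\<Sum>b\<in>?fibre. generator S c a b) = generator S c a a + (\<Sum>b\<in>?fibre - {a}. c a b)"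
      using assms(1) \<open>a \<in> S\<close>
      by (subst sum.remove[of _ a]) (auto simp: generator_def intro!: sum.cong split: if_split_asm)
    ultimately show ?thesis
      using True by (simp add: generator_def)
  qed
qed

lemma marginal_is_mjp_with_iff_lumpable:
  assumes "finite S" and "finite T" and "f ` S \<subseteq> T"
  shows "marginal_is_mjp_with S c f T c' \<longleftrightarrow> lumpable S c f T c'"
  using lumpable_if_marginal_is_mjp_with marginal_is_mjp_with_if_lumpable assms by blast

lemma lumped_rates_if_marginal_is_mjp_with:
  assumes "marginal_is_mjp_with S c f T c'" and "finite S" and "finite T" and "f ` S \<subseteq> T"
    and "a \<in> S" and "a' \<in> S" and "f a' = f a" and "y \<in> T" and "y \<noteq> f a"
  shows "(\<Sum>b\<in>{b\<in>S. f b = y}. c a b) = (\<Sum>b\<in>{b\<in>S. f b = y}. c a' b)"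
proof -
  have "(\<Sum>b\<in>{b\<in>S. f b = y}. c s b) = generator T c' (f a) y" if "s \<in> S" and "f s = f a" for s
  proof -
    have "(\<Sum>b\<in>{b\<in>S. f b = y}. c s b) = (\<Sum>b\<in>{b\<in>S. f b = y}. generator S c s b)"
      using that \<open>y \<noteq> f a\<close> by (intro sum.cong) (auto simp: generator_def)
    also have "\<dots> = generator T c' (f a) y"
      using assms(1-4,8) that by (simp add: marginal_is_mjp_with_iff_lumpable lumpable_def)
    finally show ?thesis .
  qed
  then show ?thesis
    using assms(5-7) by simp
qed

lemma finite_Sig: "finite (Sig :: ('v::finite) sconf set)"
  using finite_set_of_finite_funs[of "UNIV :: 'v set" "{-1, 1 :: int}" 0] by (simp add: Sig_def)

lemma finite_Eta: "finite (Eta (E :: ('v::finite) set set))"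
  using finite_set_of_finite_funs[of E "{0, 1 :: nat}" 0]
  by (rule finite_subset[rotated]) (auto simp: Eta_def)

lemma finite_States: "finite (States (E :: ('v::finite) set set))"
  unfolding States_def using finite_Sig finite_Eta by blast

lemma flip_flip [simp]: "flip (flip \<sigma> x) x = \<sigma>"
  by (auto simp: flip_def)

lemma flip_in_Sig: "\<sigma> \<in> Sig \<Longrightarrow> flip \<sigma> x \<in> Sig"
  by (auto simp: flip_def Sig_def)

lemma Sig_nonzero: "\<sigma> \<in> Sig \<Longrightarrow> \<sigma> x \<noteq> 0"
  by (auto simp: Sig_def dest: spec[of _ x])

lemma flip_eq_flip_iff:
  assumes "\<sigma> \<in> Sig"
  shows "flip \<sigma> x = flip \<sigma> y \<longleftrightarrow> x = y"
proof
  assume "flip \<sigma> x = flip \<sigma> y"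
  then have "flip \<sigma> x x = flip \<sigma> y x"
    by simp
  then show "x = y"
    using Sig_nonzero[OF assms, of x] by (auto simp: flip_def split: if_splits)
qed simp

lemma delta_le_1: "delta \<sigma> e \<le> 1"
  by (simp add: delta_def)

lemma delta_flip_notin: "x \<notin> e \<Longrightarrow> delta (flip \<sigma> x) e = delta \<sigma> e"
  unfolding delta_def flip_def by (metis fun_upd_other)

lemma delta_pair: "delta \<sigma> {u, v} = (if \<sigma> u = \<sigma> v then 1 else 0)"
  by (auto simp: delta_def)

lemma delta_flip_in:
  assumes "\<sigma> \<in> Sig" and "\<exists>u v. u \<noteq> v \<and> e = {u, v}" and "x \<in> e"
  shows "delta (flip \<sigma> x) e = 1 - delta \<sigma> e"
proof -
  obtain u v where "u \<noteq> v" "e = {u, v}"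
    using assms(2) by blast
  moreover have "\<sigma> u \<in> {-1, 1}" "\<sigma> v \<in> {-1, 1}"
    using assms(1) by (auto simp: Sig_def)
  ultimately show ?thesis
    using assms(3) by (auto simp: delta_pair flip_def)
qed

definition edge_weight :: "real \<Rightarrow> nat \<Rightarrow> nat \<Rightarrow> real" where
  "edge_weight p v d = p * (if v = 1 then 1 else 0) * real d + (1 - p) * (if v = 0 then 1 else 0)"

lemma IPweight_eq_prod: "IPweight E p (\<eta>, \<sigma>) = (\<Prod>e\<in>E. edge_weight p (\<eta> e) (delta \<sigma> e))"
  by (simp add: IPweight_def edge_weight_def)

lemma prod_edge_weight_eq:
  assumes "finite A" and "\<And>e. e \<in> A \<Longrightarrow> \<eta> e \<in> {0, 1}"
  shows "(\<Prod>e\<in>A. edge_weight p (\<eta> e) (delta \<sigma> e))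
    = (1 - p) ^ card {e\<in>A. \<eta> e = 0} * p ^ card {e\<in>A. \<eta> e = 1}
      * (if \<forall>e\<in>A. \<eta> e \<le> delta \<sigma> e then 1 else 0)"
proof (cases "\<forall>e\<in>A. \<eta> e \<le> delta \<sigma> e")
  case True
  have "(\<Prod>e\<in>A. edge_weight p (\<eta> e) (delta \<sigma> e)) = (\<Prod>e\<in>A. if \<eta> e = 0 then 1 - p else p)"
  proof (rule prod.cong[OF refl])
    fix e assume "e \<in> A"
    then have "\<eta> e = 0 \<or> \<eta> e = 1 \<and> delta \<sigma> e = 1"
      using assms(2) True delta_le_1[of \<sigma> e] by fastforce
    then show "edge_weight p (\<eta> e) (delta \<sigma> e) = (if \<eta> e = 0 then 1 - p else p)"
      by (auto simp: edge_weight_def)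
  qed
  also have "\<dots> = (\<Prod>e\<in>A \<inter> {e. \<eta> e = 0}. 1 - p) * (\<Prod>e\<in>A \<inter> - {e. \<eta> e = 0}. p)"
    by (rule prod.If_cases[OF assms(1)])
  also have "A \<inter> - {e. \<eta> e = 0} = {e\<in>A. \<eta> e = 1}"
    using assms(2) by fastforce
  finally show ?thesis
    using True by (simp add: Collect_conj_eq Int_commute)
next
  case False
  then obtain e where "e \<in> A" and "\<eta> e = 1" and "delta \<sigma> e = 0"
    using assms(2) delta_le_1[of \<sigma>] by fastforce
  then have "edge_weight p (\<eta> e) (delta \<sigma> e) = 0"
    by (simp add: edge_weight_def)
  then have "(\<Prod>e\<in>A. edge_weight p (\<eta> e) (delta \<sigma> e)) = 0"
    using assms(1) \<open>e \<in> A\<close> by (intro prod_zero) auto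
  then show ?thesis
    by (simp only: if_not_P[OF False] mult_zero_right)
qed

lemma joint_rate_eq_0_if_not_flip:
  "(\<forall>x. \<sigma>' \<noteq> flip \<sigma> x) \<Longrightarrow> joint_rate E p (\<eta>, \<sigma>) (\<eta>', \<sigma>') = 0"
  by (auto simp: joint_rate_def)

lemma joint_rate_flip:
  fixes E :: "('v::finite) set set"
  assumes "\<sigma> \<in> Sig" and "\<eta>' \<in> Eta E"
  shows "joint_rate E p (\<eta>, \<sigma>) (\<eta>', flip \<sigma> x) =
    (if \<forall>e\<in>E - edges_at E x. \<eta>' e = \<eta> e
     then \<Prod>e\<in>edges_at E x. edge_weight p (\<eta>' e) (delta (flip \<sigma> x) e) else 0)"
proof (cases "\<forall>e\<in>E - edges_at E x. \<eta>' e = \<eta> e")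
  case True
  have ex: "\<exists>x'. flip \<sigma> x = flip \<sigma> x' \<and> (\<forall>e\<in>E - edges_at E x'. \<eta>' e = \<eta> e)"
    using True by blast
  have the_x: "(THE x'. flip \<sigma> x = flip \<sigma> x' \<and> (\<forall>e\<in>E - edges_at E x'. \<eta>' e = \<eta> e)) = x"
    using True flip_eq_flip_iff[OF assms(1)] by (intro the_equality) auto
  have "\<And>e. e \<in> edges_at E x \<Longrightarrow> \<eta>' e \<in> {0, 1}"
    using assms(2) by (auto simp: Eta_def edges_at_def)
  then have "(\<Prod>e\<in>edges_at E x. edge_weight p (\<eta>' e) (delta (flip \<sigma> x) e))
      = (1 - p) ^ card {e\<in>edges_at E x. \<eta>' e = 0} * p ^ card {e\<in>edges_at E x. \<eta>' e = 1}
        * (if (\<eta>', flip \<sigma> x) \<in> Cx E x then 1 else 0)"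
    unfolding Cx_def by (subst prod_edge_weight_eq) simp_all
  then show ?thesis
    unfolding joint_rate_def prod.case if_P[OF ex] Let_def the_x if_P[OF True] by (rule sym)
next
  case False
  then have "\<not> (\<exists>x'. flip \<sigma> x = flip \<sigma> x' \<and> (\<forall>e\<in>E - edges_at E x'. \<eta>' e = \<eta> e))"
    by (simp add: flip_eq_flip_iff[OF assms(1)])
  then have "joint_rate E p (\<eta>, \<sigma>) (\<eta>', flip \<sigma> x) = 0"
    unfolding joint_rate_def prod.case by (rule if_not_P)
  then show ?thesis
    by (simp only: if_not_P[OF False])
qed

lemma joint_rate_nonneg:
  assumes "0 \<le> p" and "p \<le> 1"
  shows "0 \<le> joint_rate E p (\<eta>, \<sigma>) (\<eta>', \<sigma>')"
proof -
  have "0 \<le> (1 - p) ^ k * p ^ j * (if P then 1 else 0)" for k j P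
    using assms by simp
  then show ?thesis
    unfolding joint_rate_def prod.case Let_def by simp
qed

lemma IPweight_detailed_balance:
  fixes E :: "('v::finite) set set"
  assumes "(\<eta>, \<sigma>) \<in> States E" and "(\<eta>', \<sigma>') \<in> States E"
  shows "IPweight E p (\<eta>, \<sigma>) * joint_rate E p (\<eta>, \<sigma>) (\<eta>', \<sigma>')
       = IPweight E p (\<eta>', \<sigma>') * joint_rate E p (\<eta>', \<sigma>') (\<eta>, \<sigma>)"
proof (cases "\<exists>x. \<sigma>' = flip \<sigma> x")
  case False
  then have "\<forall>x. \<sigma> \<noteq> flip \<sigma>' x"
    by (metis flip_flip)
  then show ?thesis
    using False by (simp add: joint_rate_eq_0_if_not_flip)
next
  case True
  then obtain x where x: "\<sigma>' = flip \<sigma> x"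
    by blast
  define A where "A = edges_at E x"
  let ?w = "\<lambda>\<eta> \<sigma> e. edge_weight p (\<eta> e) (delta \<sigma> e)"
  have "\<sigma> \<in> Sig" "\<eta> \<in> Eta E" "\<sigma>' \<in> Sig" "\<eta>' \<in> Eta E"
    using assms by (auto simp: States_def)
  then have rate: "joint_rate E p (\<eta>, \<sigma>) (\<eta>', \<sigma>')
      = (if \<forall>e\<in>E - A. \<eta>' e = \<eta> e then prod (?w \<eta>' \<sigma>') A else 0)"
    and rate': "joint_rate E p (\<eta>', \<sigma>') (\<eta>, \<sigma>)
      = (if \<forall>e\<in>E - A. \<eta> e = \<eta>' e then prod (?w \<eta> \<sigma>) A else 0)"
    using joint_rate_flip[of \<sigma> \<eta>' E p \<eta> x] joint_rate_flip[of \<sigma>' \<eta> E p \<eta>' x]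
    by (simp_all add: x A_def)
  have split: "IPweight E p (\<eta>, \<sigma>) = prod (?w \<eta> \<sigma>) (E - A) * prod (?w \<eta> \<sigma>) A" for \<eta> \<sigma>
    unfolding IPweight_eq_prod A_def by (rule prod.subset_diff) (auto simp: edges_at_def)
  show ?thesis
  proof (cases "\<forall>e\<in>E - A. \<eta>' e = \<eta> e")
    case agree: True
    have "prod (?w \<eta> \<sigma>) (E - A) = prod (?w \<eta>' \<sigma>') (E - A)"
      using agree by (intro prod.cong) (auto simp: x A_def edges_at_def delta_flip_notin)
    then show ?thesis
      unfolding split rate rate' using agree by (simp add: ac_simps)
  next
    case False
    moreover have "\<not> (\<forall>e\<in>E - A. \<eta> e = \<eta>' e)"
      using False by force
    ultimately show ?thesis
      unfolding rate rate' by (simp only: if_False mult_zero_right)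
  qed
qed

lemma reversible_joint_rate:
  fixes E :: "('v::finite) set set"
  shows "reversible (States E) (IP E p) (joint_rate E p)"
  unfolding reversible_def IP_def
  using IPweight_detailed_balance by (fastforce simp: field_simps)

lemma sum_Eta_agreeing_off:
  fixes E :: "('v::finite) set set" and g :: "'v set \<Rightarrow> nat \<Rightarrow> 'a::comm_semiring_1"
  assumes "\<eta> \<in> Eta E" and "A \<subseteq> E"
  shows "(\<Sum>\<eta>'\<in>{\<eta>'\<in>Eta E. \<forall>e\<in>E - A. \<eta>' e = \<eta> e}. \<Prod>e\<in>A. g e (\<eta>' e))
    = (\<Prod>e\<in>A. g e 0 + g e 1)"
proof -
  have "(\<Sum>\<eta>'\<in>{\<eta>'\<in>Eta E. \<forall>e\<in>E - A. \<eta>' e = \<eta> e}. \<Prod>e\<in>A. g e (\<eta>' e))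
      = (\<Sum>h\<in>PiE A (\<lambda>_. {0, 1}). \<Prod>e\<in>A. g e (h e))"
  proof (rule sum.reindex_bij_witness[where i = "\<lambda>h e. if e \<in> A then h e else \<eta> e" and j = "\<lambda>\<eta>'. restrict \<eta>' A"])
    fix \<eta>' assume \<eta>': "\<eta>' \<in> {\<eta>'\<in>Eta E. \<forall>e\<in>E - A. \<eta>' e = \<eta> e}"
    show "(\<lambda>e. if e \<in> A then restrict \<eta>' A e else \<eta> e) = \<eta>'"
    proof
      fix e
      show "(if e \<in> A then restrict \<eta>' A e else \<eta> e) = \<eta>' e"
        using \<eta>' assms(1) by (cases "e \<in> E") (auto simp: Eta_def)
    qed
    show "restrict \<eta>' A \<in> PiE A (\<lambda>_. {0, 1})"
      using \<eta>' assms(2) by (fastforce simp: Eta_def)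
    show "(\<Prod>e\<in>A. g e (restrict \<eta>' A e)) = (\<Prod>e\<in>A. g e (\<eta>' e))"
      by simp
  next
    fix h :: "'v set \<Rightarrow> nat" assume h: "h \<in> PiE A (\<lambda>_. {0, 1})"
    show "restrict (\<lambda>e. if e \<in> A then h e else \<eta> e) A = h"
      using h by (auto simp: restrict_def PiE_def extensional_def fun_eq_iff)
    show "(\<lambda>e. if e \<in> A then h e else \<eta> e) \<in> {\<eta>'\<in>Eta E. \<forall>e\<in>E - A. \<eta>' e = \<eta> e}"
      using h assms by (auto simp: Eta_def PiE_def Pi_def)
  qed
  also have "\<dots> = (\<Prod>e\<in>A. \<Sum>v\<in>{0, 1}. g e v)"
    by (rule prod_sum_PiE[symmetric]) auto
  finally show ?thesis
    by simp
qed

lemma sum_joint_rate_snd_eq_glauber_rate: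
  fixes E :: "('v::finite) set set"
  assumes edges: "\<forall>e\<in>E. \<exists>x y. x \<noteq> y \<and> e = {x, y}"
    and "(\<eta>, \<sigma>) \<in> States E" and "\<sigma>' \<in> Sig"
  shows "(\<Sum>b\<in>{b\<in>States E. snd b = \<sigma>'}. joint_rate E p (\<eta>, \<sigma>) b) = glauber_rate E p \<sigma> \<sigma>'"
proof -
  have "\<sigma> \<in> Sig" and "\<eta> \<in> Eta E"
    using assms(2) by (auto simp: States_def)
  have "{b\<in>States E. snd b = \<sigma>'} = (\<lambda>\<eta>'. (\<eta>', \<sigma>')) ` Eta E"
    using assms(3) by (auto simp: States_def)
  then have "(\<Sum>b\<in>{b\<in>States E. snd b = \<sigma>'}. joint_rate E p (\<eta>, \<sigma>) b)
      = (\<Sum>\<eta>'\<in>Eta E. joint_rate E p (\<eta>, \<sigma>) (\<eta>', \<sigma>'))"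
    by (simp add: sum.reindex inj_on_def)
  also have "\<dots> = glauber_rate E p \<sigma> \<sigma>'"
  proof (cases "\<exists>x. \<sigma>' = flip \<sigma> x")
    case False
    then show ?thesis
      by (simp add: joint_rate_eq_0_if_not_flip glauber_rate_def)
  next
    case True
    then obtain x where x: "\<sigma>' = flip \<sigma> x"
      by blast
    have "(THE x'. \<sigma>' = flip \<sigma> x') = x"
      using x flip_eq_flip_iff[OF \<open>\<sigma> \<in> Sig\<close>] by (intro the_equality) auto
    then have glauber: "glauber_rate E p \<sigma> \<sigma>' = (1 - p) ^ card {e\<in>edges_at E x. delta \<sigma> e = 1}"
      using True by (simp add: glauber_rate_def)
    have "(\<Sum>\<eta>'\<in>Eta E. joint_rate E p (\<eta>, \<sigma>) (\<eta>', \<sigma>'))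
        = (\<Sum>\<eta>'\<in>{\<eta>'\<in>Eta E. \<forall>e\<in>E - edges_at E x. \<eta>' e = \<eta> e}.
             \<Prod>e\<in>edges_at E x. edge_weight p (\<eta>' e) (delta \<sigma>' e))"
      unfolding x using \<open>\<sigma> \<in> Sig\<close>
      by (simp add: joint_rate_flip sum.inter_filter[OF finite_Eta, symmetric])
    also have "\<dots> = (\<Prod>e\<in>edges_at E x. edge_weight p 0 (delta \<sigma>' e) + edge_weight p 1 (delta \<sigma>' e))"
      using \<open>\<eta> \<in> Eta E\<close> by (rule sum_Eta_agreeing_off) (auto simp: edges_at_def)
    also have "\<dots> = (\<Prod>e\<in>edges_at E x. if delta \<sigma> e = 1 then 1 - p else 1)"
    proof (rule prod.cong[OF refl])
      fix e assume "e \<in> edges_at E x"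
      then have "delta \<sigma>' e = 1 - delta \<sigma> e"
        unfolding x using edges \<open>\<sigma> \<in> Sig\<close> by (intro delta_flip_in) (auto simp: edges_at_def)
      then show "edge_weight p 0 (delta \<sigma>' e) + edge_weight p 1 (delta \<sigma>' e) = (if delta \<sigma> e = 1 then 1 - p else 1)"
        using delta_le_1[of \<sigma> e] by (auto simp: edge_weight_def)
    qed
    also have "\<dots> = (1 - p) ^ card {e\<in>edges_at E x. delta \<sigma> e = 1}"
      by (simp add: prod.If_cases Collect_conj_eq Int_commute)
    finally show ?thesis
      using glauber by simp
  qed
  finally show ?thesis .
qed

lemma spin_marginal_is_glauber:
  fixes E :: "('v::finite) set set"
  assumes "\<forall>e\<in>E. \<exists>x y. x \<noteq> y \<and> e = {x, y}"
  shows "marginal_is_mjp_with (States E) (joint_rate E p) snd Sig (glauber_rate E p)"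
proof -
  have "snd ` States E \<subseteq> Sig"
    by (auto simp: States_def)
  then show ?thesis
    unfolding marginal_is_mjp_with_iff_lumpable[OF finite_States finite_Sig \<open>snd ` States E \<subseteq> Sig\<close>]
    using finite_States finite_Sig sum_joint_rate_snd_eq_glauber_rate[OF assms]
    by (intro lumpable_if_lumped_rates) auto
qed

lemma joint_rate_eq_0_if_opens_agreeing_edge:
  fixes E :: "('v::finite) set set"
  assumes edges: "\<forall>e\<in>E. \<exists>x y. x \<noteq> y \<and> e = {x, y}"
    and "\<sigma> \<in> Sig" and "\<eta>' \<in> Eta E" and "e \<in> E"
    and "delta \<sigma> e = 1" and "\<eta> e = 0" and "\<eta>' e = 1"
  shows "joint_rate E p (\<eta>, \<sigma>) (\<eta>', \<sigma>') = 0"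
proof (cases "\<exists>x. \<sigma>' = flip \<sigma> x")
  case False
  then show ?thesis
    by (simp add: joint_rate_eq_0_if_not_flip)
next
  case True
  then obtain x where x: "\<sigma>' = flip \<sigma> x"
    by blast
  show ?thesis
  proof (cases "\<forall>e\<in>E - edges_at E x. \<eta>' e = \<eta> e")
    case agree: True
    then have "e \<in> edges_at E x"
      using assms(4,6,7) by force
    then have "delta \<sigma>' e = 0"
      unfolding x using edges assms(2,5) by (subst delta_flip_in) (auto simp: edges_at_def)
    then have "edge_weight p (\<eta>' e) (delta \<sigma>' e) = 0"
      using assms(7) by (simp add: edge_weight_def)
    then have "(\<Prod>e\<in>edges_at E x. edge_weight p (\<eta>' e) (delta \<sigma>' e)) = 0"
      using \<open>e \<in> edges_at E x\<close> by (intro prod_zero) auto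
    then show ?thesis
      unfolding x joint_rate_flip[OF assms(2,3)] if_P[OF agree] .
  next
    case False
    then show ?thesis
      unfolding x joint_rate_flip[OF assms(2,3)] by (rule if_not_P)
  qed
qed

lemma joint_rate_flip_pos:
  fixes E :: "('v::finite) set set"
  assumes "0 < p" and "p < 1" and "\<sigma> \<in> Sig" and "\<eta>' \<in> Eta E"
    and "\<forall>e\<in>E - edges_at E x. \<eta>' e = \<eta> e"
    and "\<forall>e\<in>edges_at E x. \<eta>' e \<le> delta (flip \<sigma> x) e"
  shows "0 < joint_rate E p (\<eta>, \<sigma>) (\<eta>', flip \<sigma> x)"
  unfolding joint_rate_flip[OF assms(3,4)] if_P[OF assms(5)]
proof (rule prod_pos)
  fix e assume "e \<in> edges_at E x"
  then have "\<eta>' e = 0 \<or> \<eta>' e = 1 \<and> delta (flip \<sigma> x) e = 1"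
    using assms(4,6) delta_le_1[of "flip \<sigma> x" e] by (fastforce simp: Eta_def edges_at_def)
  then show "0 < edge_weight p (\<eta>' e) (delta (flip \<sigma> x) e)"
    using assms(1,2) by (auto simp: edge_weight_def)
qed

lemma edge_marginal_not_mjp:
  fixes E :: "('v::finite) set set"
  assumes edges: "\<forall>e\<in>E. \<exists>x y. x \<noteq> y \<and> e = {x, y}"
    and "E \<noteq> {}" and "0 < p" and "p < 1"
  shows "\<not> marginal_is_mjp (States E) (joint_rate E p) fst (Eta E)"
proof
  assume "marginal_is_mjp (States E) (joint_rate E p) fst (Eta E)"
  then obtain c' where marginal: "marginal_is_mjp_with (States E) (joint_rate E p) fst (Eta E) c'"
    unfolding marginal_is_mjp_def by blast
  obtain e0 u v where "e0 \<in> E" and "u \<noteq> v" and e0: "e0 = {u, v}"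
    using assms(1,2) by blast
  define \<sigma>1 where "\<sigma>1 = (\<lambda>_::'v. 1::int)"
  define y where "y = (\<lambda>e. if e = e0 then 1 else 0::nat)"
  define F where "F = {b\<in>States E. fst b = y}"
  have "\<sigma>1 \<in> Sig" and "y \<in> Eta E" and "(\<lambda>_. 0) \<in> Eta E"
    using \<open>e0 \<in> E\<close> by (auto simp: \<sigma>1_def Sig_def y_def Eta_def)
  then have "flip \<sigma>1 u \<in> Sig"
    by (simp add: flip_in_Sig)
  have "delta \<sigma>1 e = 1" for e
    by (simp add: delta_def \<sigma>1_def)
  have "y \<noteq> (\<lambda>_. 0)"
    by (metis y_def zero_neq_one)
  have "(\<Sum>b\<in>F. joint_rate E p (\<lambda>_. 0, \<sigma>1) b) = (\<Sum>b\<in>F. joint_rate E p (\<lambda>_. 0, flip \<sigma>1 u) b)"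
    unfolding F_def
    using \<open>\<sigma>1 \<in> Sig\<close> \<open>flip \<sigma>1 u \<in> Sig\<close> \<open>y \<in> Eta E\<close> \<open>(\<lambda>_. 0) \<in> Eta E\<close> \<open>y \<noteq> (\<lambda>_. 0)\<close>
    by (intro lumped_rates_if_marginal_is_mjp_with[OF marginal finite_States finite_Eta])
      (auto simp: States_def)
  moreover have "(\<Sum>b\<in>F. joint_rate E p (\<lambda>_. 0, \<sigma>1) b) = 0"
    using \<open>\<sigma>1 \<in> Sig\<close> \<open>e0 \<in> E\<close> \<open>delta \<sigma>1 e0 = 1\<close>
    by (intro sum.neutral)
      (auto simp: F_def States_def y_def intro!: joint_rate_eq_0_if_opens_agreeing_edge[OF edges])
  moreover have "0 < (\<Sum>b\<in>F. joint_rate E p (\<lambda>_. 0, flip \<sigma>1 u) b)"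
  proof (rule sum_pos2)
    show "finite F"
      by (simp add: F_def finite_States)
    show "(y, \<sigma>1) \<in> F"
      using \<open>y \<in> Eta E\<close> \<open>\<sigma>1 \<in> Sig\<close> by (simp add: F_def States_def)
    have "e0 \<in> edges_at E u"
      using \<open>e0 \<in> E\<close> e0 by (simp add: edges_at_def)
    then have "0 < joint_rate E p (\<lambda>_. 0, flip \<sigma>1 u) (y, flip (flip \<sigma>1 u) u)"
      using assms(3,4) \<open>flip \<sigma>1 u \<in> Sig\<close> \<open>y \<in> Eta E\<close> \<open>\<And>e. delta \<sigma>1 e = 1\<close>
      by (intro joint_rate_flip_pos) (auto simp: y_def)
    then show "0 < joint_rate E p (\<lambda>_. 0, flip \<sigma>1 u) (y, \<sigma>1)"
      by simp
    show "0 \<le> joint_rate E p (\<lambda>_. 0, flip \<sigma>1 u) b" for b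
      using assms(3,4) joint_rate_nonneg[of p E] by (cases b) simp
  qed
  ultimately show False
    by simp
qed

theorem theorem3:
  fixes E :: "('v::finite) set set" and p :: real
  assumes "\<forall>e\<in>E. \<exists>x y. x \<noteq> y \<and> e = {x, y}"
    and "E \<noteq> {}"
    and "0 < p" and "p < 1"
  shows "reversible (States E) (IP E p) (joint_rate E p)
    \<and> marginal_is_mjp_with (States E) (joint_rate E p) snd Sig (glauber_rate E p)
    \<and> \<not> marginal_is_mjp (States E) (joint_rate E p) fst (Eta E)"
  using reversible_joint_rate spin_marginal_is_glauber[OF assms(1)] edge_marginal_not_mjp[OF assms]
  by blast

end
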